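(* Let $N\ge 2$, let $f,g,\lambda,\Omega,u$ be as follows: $f:[0,+\infty)^2\to\mathbb{R}$ bounded measurable, $v\mapsto f(r,v)$ continuous uniformly in $r$, $r\mapsto f(r,v)$ nonincreasing; $g\in C([0,+\infty))\cap C^1((0,+\infty))$, $g(0)=0$, $g'>0$ on $(0,+\infty)$; $\lambda\in C([0,+\infty))$ positive and nondecreasing; $\Omega\subset\mathbb{R}^N$ a bounded domain; $u\in C^1(\Omega)\cap C(\overline\Omega)$ a weak solution of $-\nabla\cdot(g(|\nabla u|)\nabla u/|\nabla u|)=f(|x|,u)$, $u>0$ in $\Omega$, $u=0$ on $\partial\Omega$, such that for every $\varepsilon>0$ there is an open $U\supset\partial\Omega$ with $||\nabla u(x)|-\lambda(|x|)|<\varepsilon$ on $U\cap\Omega$. Extend $u$ by zero outside $\Omega$, let $L$ be its Lipschitz constant on $\mathbb{R}^N$, fix $R>0$ with $\overline\Omega\subset B_R$, and set $k:=2RL$. Let $u^t$ ($0\le t\le+\infty$) denote the continuous Steiner symmetrization of $u$ with respect to $x_1$. If $t\in[0,+\infty)$ and $x\in\mathbb{R}^N$ satisfy $u^t(x)>kt$, then $x\in\Omega$.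
   Context: Weak solution: $\int_\Omega g(|\nabla u|)\frac{\nabla u\cdot\nabla v}{|\nabla u|}dx=\int_\Omega f(|x|,u)v\,dx$ for all $v\in W_0^{1,1}(\Omega)\cap W^{1,\infty}(\Omega)$ (with $g(|y|)y/|y|:=0$ for $y=0$). The zero extension of $u$ is Lipschitz continuous on $\mathbb{R}^N$ (as asserted in the paper). Continuous Steiner symmetrization (CStS): on the family $\mathscr{M}(\mathbb{R})$ of measurable subsets of $\mathbb{R}$ of finite measure there is a unique family of maps $E_t:\mathscr{M}(\mathbb{R})\to\mathscr{M}(\mathbb{R})$, $0\le t\le+\infty$, such that (i) $\mathscr{L}^1(E_t(M))=\mathscr{L}^1(M)$; (ii) $M\subset N$ implies $E_t(M)\subset E_t(N)$; (iii) $E_t(E_s(M))=E_{s+t}(M)$; (iv) $E_t([x-R,x+R])=[xe^{-t}-R,xe^{-t}+R]$. For $M\subset\mathbb{R}^N$ measurable of finite measure, writing $x=(x_1,x')$ and $M(x')=\{x_1:(x_1,x')\in M\}$, set $E_t(M)=\{(x_1,x'):x_1\in E_t(M(x'))\}$. For a nonnegative measurable $u$ with $\mathscr{L}^N(\{u>c\})<\infty$ for all $c>0$, define $u^t(x)=\sup\{c>0:x\in E_t(\{u>c\})\}$ if $x\in\bigcup_{c>0}E_t(\{u>c\})$ and $u^t(x)=0$ otherwise. For continuous $u$, $u^t$ denotes its unique continuous representative (obtained by using the open precise representatives of the sets $E_t(\{u>c\})$); $u^\infty$ is the Steiner symmetrization of $u$ in $x_1$. *)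

theory Defs
  imports "HOL-Analysis.Analysis"
begin

definition fm :: "real set \<Rightarrow> bool" where
  "fm M \<longleftrightarrow> M \<in> sets lebesgue \<and> emeasure lebesgue M < \<infinity>"

definition ae_eq :: "'b::euclidean_space set \<Rightarrow> 'b set \<Rightarrow> bool" where
  "ae_eq A B \<longleftrightarrow> (A - B) \<union> (B - A) \<in> null_sets lebesgue"

definition escale :: "ereal \<Rightarrow> real" where
  "escale t = (if t = \<infinity> then 0 else exp (- real_of_ereal t))"

text \<open>E is a continuous Steiner symmetrization family E_t, 0 <= t <= infinity, on the
  measurable sets of finite measure (properties (i)-(iv), understood up to null sets).\<close>
definition CStS :: "(ereal \<Rightarrow> real set \<Rightarrow> real set) \<Rightarrow> bool" where
  "CStS E \<longleftrightarrow>
     (\<forall>t M. 0 \<le> t \<and> fm M \<longrightarrow> fm (E t M) \<and> emeasure lebesgue (E t M) = emeasure lebesgue M)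
   \<and> (\<forall>t M N. 0 \<le> t \<and> fm M \<and> fm N \<and> M \<subseteq> N \<longrightarrow> E t M - E t N \<in> null_sets lebesgue)
   \<and> (\<forall>s t M. 0 \<le> s \<and> 0 \<le> t \<and> fm M \<longrightarrow> ae_eq (E t (E s M)) (E (s + t) M))
   \<and> (\<forall>t x R. 0 \<le> t \<and> 0 < R \<longrightarrow>
        ae_eq (E t {x - R .. x + R}) {x * escale t - R .. x * escale t + R})"

text \<open>Open precise representative of a set (depends only on its a.e. class).\<close>
definition orep :: "'b::euclidean_space set \<Rightarrow> 'b set" where
  "orep A = {x. \<exists>e>0. ball x e - A \<in> null_sets lebesgue}"

text \<open>Points of R^N are written (x1, x') with x' in R^(N-1) (any euclidean space);
  E_t acts on the x1-slices.\<close>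
definition EN :: "(ereal \<Rightarrow> real set \<Rightarrow> real set) \<Rightarrow> ereal \<Rightarrow> (real \<times> 'a::euclidean_space) set
                   \<Rightarrow> (real \<times> 'a) set" where
  "EN E t M = {(x1, x'). x1 \<in> orep (E t {y. (y, x') \<in> M})}"

definition cstsym :: "(ereal \<Rightarrow> real set \<Rightarrow> real set) \<Rightarrow> ereal \<Rightarrow> (real \<times> 'a::euclidean_space \<Rightarrow> real)
                        \<Rightarrow> real \<times> 'a \<Rightarrow> real" where
  "cstsym E t u x =
     (if \<exists>c>0. x \<in> orep (EN E t {y. u y > c})
      then Sup {c. c > 0 \<and> x \<in> orep (EN E t {y. u y > c})} else 0)"

fun Ck :: "nat \<Rightarrow> ('b::euclidean_space \<Rightarrow> real) \<Rightarrow> bool" where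
  "Ck 0 \<phi> = continuous_on UNIV \<phi>"
| "Ck (Suc k) \<phi> = ((\<forall>x. \<phi> differentiable (at x)) \<and> continuous_on UNIV \<phi> \<and>
      (\<forall>i\<in>Basis. Ck k (\<lambda>x. frechet_derivative \<phi> (at x) i)))"

definition test_fun :: "'b::euclidean_space set \<Rightarrow> ('b \<Rightarrow> real) \<Rightarrow> bool" where
  "test_fun \<Omega> \<phi> \<longleftrightarrow> (\<forall>k. Ck k \<phi>) \<and> compact (closure {x. \<phi> x \<noteq> 0})
                     \<and> closure {x. \<phi> x \<noteq> 0} \<subseteq> \<Omega>"

definition grad :: "('b::euclidean_space \<Rightarrow> real) \<Rightarrow> 'b \<Rightarrow> 'b" where
  "grad \<phi> x = (\<Sum>i\<in>Basis. frechet_derivative \<phi> (at x) i *\<^sub>R i)"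

definition weak_grad :: "'b::euclidean_space set \<Rightarrow> ('b \<Rightarrow> real) \<Rightarrow> ('b \<Rightarrow> 'b) \<Rightarrow> bool" where
  "weak_grad \<Omega> v Dv \<longleftrightarrow>
     (\<forall>K. compact K \<and> K \<subseteq> \<Omega> \<longrightarrow> set_integrable lebesgue K v \<and> set_integrable lebesgue K Dv) \<and>
     (\<forall>\<phi>. test_fun \<Omega> \<phi> \<longrightarrow> (\<forall>i\<in>Basis.
        (LINT x:\<Omega>|lebesgue. v x * (frechet_derivative \<phi> (at x) i))
        = - (LINT x:\<Omega>|lebesgue. (Dv x \<bullet> i) * \<phi> x)))"

definition W1inf :: "'b::euclidean_space set \<Rightarrow> ('b \<Rightarrow> real) \<Rightarrow> ('b \<Rightarrow> 'b) \<Rightarrow> bool" where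
  "W1inf \<Omega> v Dv \<longleftrightarrow> set_borel_measurable lebesgue \<Omega> v \<and> set_borel_measurable lebesgue \<Omega> Dv \<and>
     (\<exists>C. AE x in lebesgue. x \<in> \<Omega> \<longrightarrow> \<bar>v x\<bar> \<le> C \<and> norm (Dv x) \<le> C) \<and> weak_grad \<Omega> v Dv"

definition W01_1 :: "'b::euclidean_space set \<Rightarrow> ('b \<Rightarrow> real) \<Rightarrow> ('b \<Rightarrow> 'b) \<Rightarrow> bool" where
  "W01_1 \<Omega> v Dv \<longleftrightarrow> set_integrable lebesgue \<Omega> v \<and> set_integrable lebesgue \<Omega> Dv \<and>
     weak_grad \<Omega> v Dv \<and>
     (\<exists>\<phi>s. (\<forall>n. test_fun \<Omega> (\<phi>s n)) \<and>
        (\<lambda>n. (LINT x:\<Omega>|lebesgue. \<bar>\<phi>s n x - v x\<bar> + norm (grad (\<phi>s n) x - Dv x)))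
          \<longlonglongrightarrow> 0)"

definition Gfield :: "(real \<Rightarrow> real) \<Rightarrow> 'b::euclidean_space \<Rightarrow> 'b" where
  "Gfield g y = (if y = 0 then 0 else (g (norm y) / norm y) *\<^sub>R y)"

end

theory Submission
  imports Defs
begin

text \<open>Outside \<open>\<Omega>\<close> the function \<open>u\<close> vanishes, so by the Lipschitz bound every point of a
  superlevel set \<open>{u > c}\<close> lies at distance more than \<open>c / L\<close> from \<open>x\<close>. Hence, near \<open>x\<close>, each
  \<open>x\<^sub>1\<close>-slice of \<open>{u > c}\<close> sits inside \<open>[-R, R]\<close> and avoids an interval of radius about
  \<open>c / L\<close> around \<open>x\<^sub>1\<close>, i.e. it is covered by two disjoint intervals \<open>[-R, a] \<union> [b, R]\<close>. By
  monotonicity and measure preservation, \<open>E\<^sub>t\<close> maps the slice a.e. into the union of the images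
  of the two intervals, whose centres move by at most \<open>R (1 - e\<^sup>-\<^sup>t) \<le> R t\<close>. So for
  \<open>c > R L t\<close> a neighbourhood of \<open>x\<close> misses \<open>E\<^sub>t({u > c})\<close> up to a null set, and
  \<open>u\<^sup>t(x) \<le> R L t \<le> 2 R L t\<close>.\<close>

lemma null_sets_Diff_of_emeasure_le:
  fixes X Y :: "'b::euclidean_space set"
  assumes X: "X \<in> sets lebesgue" "emeasure lebesgue X < \<infinity>" and Y: "Y \<in> sets lebesgue"
    and YX: "Y - X \<in> null_sets lebesgue" and le: "emeasure lebesgue X \<le> emeasure lebesgue Y"
  shows "X - Y \<in> null_sets lebesgue"
proof -
  have "emeasure lebesgue Y + emeasure lebesgue (X - Y) = emeasure lebesgue (Y \<union> (X - Y))"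
    using X Y by (intro plus_emeasure) auto
  also have "Y \<union> (X - Y) = X \<union> (Y - X)" by blast
  also have "emeasure lebesgue \<dots> = emeasure lebesgue X"
    by (rule emeasure_Un_null_set[OF X(1) YX])
  finally have sum: "emeasure lebesgue Y + emeasure lebesgue (X - Y) = emeasure lebesgue X" .
  with X(2) have "emeasure lebesgue Y < \<infinity>"
    by (metis ennreal_add_eq_top infinity_ennreal_def top.not_eq_extremum)
  with sum le have "emeasure lebesgue (X - Y) = 0"
    by (metis add.right_neutral antisym ennreal_add_left_cancel_le
        less_imp_neq zero_le)
  then show ?thesis using X Y by (simp add: null_setsI sets.Diff)
qed

lemma emeasure_lebesgue_Icc: "emeasure lebesgue {p..q::real} = ennreal (if p \<le> q then q - p else 0)"
  by simp

lemma fm_Icc: "fm {p..q}"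
  unfolding fm_def emeasure_lebesgue_Icc by auto

lemma fm_Un: "fm M \<Longrightarrow> fm N \<Longrightarrow> fm (M \<union> N)"
  unfolding fm_def
  by (metis emeasure_subadditive ennreal_add_eq_top infinity_ennreal_def order_le_less_trans
      sets.Un top.not_eq_extremum)

lemma fm_subset: "M \<in> sets lebesgue \<Longrightarrow> M \<subseteq> N \<Longrightarrow> fm N \<Longrightarrow> fm M"
  unfolding fm_def by (meson emeasure_mono order_le_less_trans)

lemma null_sets_lebesgue_subset_Un:
  assumes "A \<in> null_sets lebesgue" "B \<in> null_sets lebesgue" "C \<subseteq> A \<union> B"
  shows "C \<in> null_sets lebesgue"
  by (rule null_sets_completion_subset[OF assms(3) null_sets.Un[OF assms(1,2)]])

lemma ae_eq_Diff_null_sets: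
  assumes "ae_eq A B"
  shows "A - B \<in> null_sets lebesgue" "B - A \<in> null_sets lebesgue"
  using assms unfolding ae_eq_def by (auto intro: null_sets_completion_subset)

text \<open>The image of \<open>[p, q]\<close> prescribed by property (iv): same length, centre multiplied by \<open>e\<close>.\<close>
definition scaled_centre_Icc :: "real \<Rightarrow> real \<Rightarrow> real \<Rightarrow> real set" where
  "scaled_centre_Icc e p q = {(p + q) / 2 * e - (q - p) / 2 .. (p + q) / 2 * e + (q - p) / 2}"

lemma emeasure_scaled_centre_Icc:
  "emeasure lebesgue (scaled_centre_Icc e p q) = emeasure lebesgue {p..q}"
  unfolding scaled_centre_Icc_def emeasure_lebesgue_Icc by (auto simp: field_simps)

lemma scaled_centre_Icc_subset:
  assumes "e \<le> 1" "-R \<le> p" "q \<le> R"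
  shows "scaled_centre_Icc e p q \<subseteq> {p - (1 - e) * R .. q + (1 - e) * R}"
proof
  fix z assume z: "z \<in> scaled_centre_Icc e p q"
  define m h where "m = (p + q) / 2" and "h = (q - p) / 2"
  have pq: "p = m - h" "q = m + h" unfolding m_def h_def by (simp_all add: field_simps)
  have zb: "m * e - h \<le> z" "z \<le> m * e + h"
    using z unfolding scaled_centre_Icc_def m_def h_def by auto
  then have "-R \<le> m" "m \<le> R" using assms pq by linarith+
  then have "m * (1 - e) \<le> R * (1 - e)" "- m * (1 - e) \<le> R * (1 - e)"
    using assms(1) by (intro mult_right_mono; simp)+
  then have "m - m * e \<le> R - R * e" "m * e - m \<le> R - R * e" by (simp_all add: algebra_simps)
  with zb pq show "z \<in> {p - (1 - e) * R .. q + (1 - e) * R}" by (auto simp: algebra_simps)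
qed

lemma CStS_Icc:
  assumes E: "CStS E" and t: "0 \<le> t"
  shows "ae_eq (E t {p..q}) (scaled_centre_Icc (escale t) p q)"
proof (cases "p < q")
  case True
  have "\<And>t x R. 0 \<le> t \<Longrightarrow> 0 < R \<Longrightarrow>
      ae_eq (E t {x - R .. x + R}) {x * escale t - R .. x * escale t + R}"
    using E unfolding CStS_def by blast
  from this[OF t, where x = "(p + q) / 2" and R = "(q - p) / 2"] True
  have "ae_eq (E t {(p + q) / 2 - (q - p) / 2 .. (p + q) / 2 + (q - p) / 2})
      (scaled_centre_Icc (escale t) p q)"
    unfolding scaled_centre_Icc_def by simp
  moreover have "{(p + q) / 2 - (q - p) / 2 .. (p + q) / 2 + (q - p) / 2} = {p..q}"
    by (auto simp: field_simps)
  ultimately show ?thesis by simp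
next
  case False
  then have zero: "emeasure lebesgue {p..q} = 0"
    unfolding emeasure_lebesgue_Icc by auto
  have "fm (E t {p..q})" "emeasure lebesgue (E t {p..q}) = emeasure lebesgue {p..q}"
    using E t fm_Icc unfolding CStS_def by blast+
  then have "E t {p..q} \<in> null_sets lebesgue"
    using zero unfolding fm_def by (simp add: null_setsI)
  moreover have "scaled_centre_Icc (escale t) p q \<in> null_sets lebesgue"
    using zero emeasure_scaled_centre_Icc[of "escale t" p q]
    by (simp add: null_setsI scaled_centre_Icc_def)
  ultimately show ?thesis
    unfolding ae_eq_def by (rule null_sets_lebesgue_subset_Un) blast
qed

text \<open>The measure of \<open>E\<^sub>t([p, a] \<union> [b, q])\<close> equals that of the union of the two disjoint
  images, which it contains a.e.; so it is a.e. contained in that union.\<close>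
lemma CStS_ae_subset_two_Icc:
  assumes E: "CStS E" and t: "0 \<le> t" and M: "fm M" and sub: "M \<subseteq> {p..a} \<union> {b..q}"
    and ab: "a < b"
    and disj: "scaled_centre_Icc (escale t) p a \<inter> scaled_centre_Icc (escale t) b q = {}"
  shows "E t M - (scaled_centre_Icc (escale t) p a \<union> scaled_centre_Icc (escale t) b q)
      \<in> null_sets lebesgue"
proof -
  define K where "K = {p..a} \<union> {b..q}"
  define I J where "I = scaled_centre_Icc (escale t) p a" and "J = scaled_centre_Icc (escale t) b q"
  have K: "fm K" unfolding K_def by (intro fm_Un fm_Icc)
  have EK: "fm (E t K)" "emeasure lebesgue (E t K) = emeasure lebesgue K"
    using E t K unfolding CStS_def by blast+
  have mono: "E t N - E t K \<in> null_sets lebesgue" if "fm N" "N \<subseteq> K" for N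
    using E t that K unfolding CStS_def by blast
  have IE: "I - E t {p..a} \<in> null_sets lebesgue" and JE: "J - E t {b..q} \<in> null_sets lebesgue"
    unfolding I_def J_def using CStS_Icc[OF E t] by (rule ae_eq_Diff_null_sets(2))+
  have EI: "E t {p..a} - E t K \<in> null_sets lebesgue" and EJ: "E t {b..q} - E t K \<in> null_sets lebesgue"
    using fm_Icc by (rule mono; simp add: K_def)+
  have "I - E t K \<in> null_sets lebesgue" "J - E t K \<in> null_sets lebesgue"
    by (rule null_sets_lebesgue_subset_Un[OF IE EI], blast)
      (rule null_sets_lebesgue_subset_Un[OF JE EJ], blast)
  then have IJ: "(I \<union> J) - E t K \<in> null_sets lebesgue"
    by (rule null_sets_lebesgue_subset_Un) blast
  have "emeasure lebesgue (E t K) = emeasure lebesgue {p..a} + emeasure lebesgue {b..q}"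
    unfolding EK(2) unfolding K_def using ab by (intro plus_emeasure[symmetric]) auto
  also have "\<dots> = emeasure lebesgue I + emeasure lebesgue J"
    unfolding I_def J_def emeasure_scaled_centre_Icc ..
  also have "\<dots> = emeasure lebesgue (I \<union> J)"
    using disj unfolding I_def J_def
    by (intro plus_emeasure) (auto simp: scaled_centre_Icc_def)
  finally have le: "emeasure lebesgue (E t K) \<le> emeasure lebesgue (I \<union> J)" by (rule eq_refl)
  have EKs: "E t K \<in> sets lebesgue" "emeasure lebesgue (E t K) < \<infinity>"
    using EK(1) unfolding fm_def by blast+
  have IJs: "I \<union> J \<in> sets lebesgue"
    unfolding I_def J_def scaled_centre_Icc_def by simp
  have KIJ: "E t K - (I \<union> J) \<in> null_sets lebesgue"
    by (rule null_sets_Diff_of_emeasure_le[OF EKs IJs IJ le])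
  have MK: "E t M - E t K \<in> null_sets lebesgue"
    using M by (rule mono) (simp add: K_def sub)
  have "E t M - (I \<union> J) \<in> null_sets lebesgue"
    using MK KIJ by (rule null_sets_lebesgue_subset_Un) blast
  then show ?thesis unfolding I_def J_def .
qed

lemma orep_Int_open_empty:
  fixes A S :: "'b::euclidean_space set"
  assumes S: "open S" and null: "S \<inter> A \<in> null_sets lebesgue"
  shows "S \<inter> orep A = {}"
proof (rule ccontr)
  assume "S \<inter> orep A \<noteq> {}"
  then obtain y r where y: "y \<in> S" and r: "r > 0" "ball y r - A \<in> null_sets lebesgue"
    unfolding orep_def by auto
  have "ball y r \<inter> S \<in> null_sets lebesgue"
    using r(2) null by (rule null_sets_lebesgue_subset_Un) blast
  moreover have "open (ball y r \<inter> S)" "y \<in> ball y r \<inter> S" using S y r(1) by auto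
  ultimately show False
    using open_not_negligible[of "ball y r \<inter> S"] negligible_iff_null_sets by blast
qed

lemma CStS_orep_avoids_gap:
  fixes t R \<rho> \<eta> x\<^sub>1 :: real
  assumes E: "CStS E" and t: "0 \<le> t" and R: "0 \<le> R" and \<eta>: "0 \<le> \<eta>" and \<rho>: "R * t + \<eta> < \<rho>"
    and M: "fm M" and sub: "M \<subseteq> {-R .. R} - ball x\<^sub>1 \<rho>"
  shows "ball x\<^sub>1 \<eta> \<inter> orep (E (ereal t) M) = {}"
proof -
  define e where "e = escale (ereal t)"
  define a b where "a = min R (x\<^sub>1 - \<rho>)" and "b = max (-R) (x\<^sub>1 + \<rho>)"
  define I J where "I = scaled_centre_Icc e (-R) a" and "J = scaled_centre_Icc e b R"
  have e: "e \<le> 1" "(1 - e) * R \<le> R * t"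
    using t R exp_ge_add_one_self[of "-t"] unfolding e_def escale_def
    by (auto simp: mult.commute intro: mult_left_mono)
  have ab: "a \<le> x\<^sub>1 - \<rho>" "x\<^sub>1 + \<rho> \<le> b" "-R \<le> b" "a \<le> R"
    unfolding a_def b_def by auto
  have "I \<subseteq> {-R - (1 - e) * R .. a + (1 - e) * R}"
    unfolding I_def using e ab by (intro scaled_centre_Icc_subset) auto
  also have "\<dots> \<subseteq> {..< x\<^sub>1 - \<eta>}" using e ab \<rho> by auto
  finally have I: "I \<subseteq> {..< x\<^sub>1 - \<eta>}" .
  have "J \<subseteq> {b - (1 - e) * R .. R + (1 - e) * R}"
    unfolding J_def using e ab by (intro scaled_centre_Icc_subset) auto
  also have "\<dots> \<subseteq> {x\<^sub>1 + \<eta> <..}" using e ab \<rho> by auto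
  finally have J: "J \<subseteq> {x\<^sub>1 + \<eta> <..}" .
  have gap: "ball x\<^sub>1 \<eta> \<inter> (I \<union> J) = {}"
    using I J by (force simp: dist_real_def)
  moreover have "I \<inter> J = {}" using I J \<eta> by force
  moreover have "M \<subseteq> {-R .. a} \<union> {b .. R}"
  proof
    fix s assume "s \<in> M"
    then have "-R \<le> s" "s \<le> R" "\<rho> \<le> \<bar>x\<^sub>1 - s\<bar>" using sub by (auto simp: dist_real_def)
    then show "s \<in> {-R .. a} \<union> {b .. R}" unfolding a_def b_def by auto
  qed
  moreover have "a < b" using ab \<rho> \<eta> R t by (smt (verit) mult_nonneg_nonneg)
  ultimately have "E (ereal t) M - (I \<union> J) \<in> null_sets lebesgue"
    using CStS_ae_subset_two_Icc[OF E _ M] t unfolding I_def J_def e_def by simp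
  moreover have "ball x\<^sub>1 \<eta> \<inter> E (ereal t) M \<subseteq> E (ereal t) M - (I \<union> J)" using gap by blast
  ultimately have "ball x\<^sub>1 \<eta> \<inter> E (ereal t) M \<in> null_sets lebesgue"
    by (rule null_sets_completion_subset[rotated])
  then show ?thesis by (rule orep_Int_open_empty[OF open_ball])
qed

lemma dist_Pair_le_add: "dist (a, b) (c, d) \<le> dist a c + dist b d"
  unfolding dist_Pair_Pair using sqrt_sum_squares_le_sum_abs[of "dist a c" "dist b d"] by simp

lemma lipschitz_superlevel_dist:
  assumes "L-lipschitz_on UNIV u" "u x \<le> 0" "c < u y"
  shows "c < L * dist y x"
  using assms lipschitz_onD[OF assms(1), of y x] by (simp add: dist_real_def)

lemma not_in_orep_EN_superlevel:
  fixes u :: "real \<times> 'a::euclidean_space \<Rightarrow> real"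
  assumes E: "CStS E" and t: "0 \<le> t" and R: "0 \<le> R" and L: "0 < L"
    and lip: "L-lipschitz_on UNIV u" and ux: "u x \<le> 0"
    and supp: "\<And>y. 0 < u y \<Longrightarrow> norm y \<le> R" and c: "L * R * t < c"
  shows "x \<notin> orep (EN E (ereal t) {y. c < u y})"
proof -
  obtain x\<^sub>1 x' where x: "x = (x\<^sub>1, x')" by (cases x)
  define d where "d = c / L - R * t"
  define \<eta> \<rho> where "\<eta> = d / 3" and "\<rho> = c / L - \<eta>"
  have "0 < d" unfolding d_def using c L by (simp add: field_simps)
  then have \<eta>: "0 < \<eta>" and \<rho>: "R * t + \<eta> < \<rho>"
    unfolding \<rho>_def \<eta>_def using d_def by linarith+
  have "0 < c" using c L R t by (smt (verit) mult_nonneg_nonneg)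
  have slice: "{s. c < u (s, y')} \<subseteq> {-R .. R} - ball x\<^sub>1 \<rho>" if y': "dist y' x' < \<eta>" for y'
  proof
    fix s assume "s \<in> {s. c < u (s, y')}"
    then have us: "c < u (s, y')" by simp
    have "\<bar>s\<bar> \<le> R" using supp[of "(s, y')"] us \<open>0 < c\<close> norm_fst_le[of s y'] by simp
    moreover have "c < L * (dist s x\<^sub>1 + \<eta>)"
    proof -
      have "c < L * dist (s, y') x" using lipschitz_superlevel_dist[OF lip ux us] .
      also have "\<dots> \<le> L * (dist s x\<^sub>1 + dist y' x')"
        unfolding x using L by (intro mult_left_mono dist_Pair_le_add) simp
      also have "\<dots> < L * (dist s x\<^sub>1 + \<eta>)" using L y' by simp
      finally show ?thesis .
    qed
    then have "\<rho> \<le> dist x\<^sub>1 s" unfolding \<rho>_def using L by (simp add: field_simps dist_commute)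
    ultimately show "s \<in> {-R .. R} - ball x\<^sub>1 \<rho>" by auto
  qed
  have "ball x \<eta> \<inter> EN E (ereal t) {y. c < u y} = {}"
  proof (intro equals0I)
    fix z assume z: "z \<in> ball x \<eta> \<inter> EN E (ereal t) {y. c < u y}"
    obtain z\<^sub>1 z' where zz: "z = (z\<^sub>1, z')" by (cases z)
    have "dist z\<^sub>1 x\<^sub>1 < \<eta>" "dist z' x' < \<eta>"
      using z dist_fst_le[of z x] dist_snd_le[of z x] unfolding x zz by (auto simp: dist_commute)
    moreover have "fm {s. c < u (s, z')}"
    proof (rule fm_subset[OF _ _ fm_Icc])
      have "continuous_on UNIV (\<lambda>s. u (s, z'))"
        by (rule continuous_on_compose2[OF lipschitz_on_continuous_on[OF lip]
              continuous_on_Pair[OF continuous_on_id continuous_on_const]]) simp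
      then have "open {s. c < u (s, z')}" by (rule open_Collect_less[OF continuous_on_const])
      then show "{s. c < u (s, z')} \<in> sets lebesgue" by (simp add: borel_open)
      show "{s. c < u (s, z')} \<subseteq> {-R .. R}" using slice[OF calculation(2)] by blast
    qed
    ultimately have "ball x\<^sub>1 \<eta> \<inter> orep (E (ereal t) {s. c < u (s, z')}) = {}"
      by (intro CStS_orep_avoids_gap[OF E t R less_imp_le[OF \<eta>] \<rho>] slice)
    with z \<open>dist z\<^sub>1 x\<^sub>1 < \<eta>\<close> show False
      unfolding zz EN_def by (auto simp: dist_commute)
  qed
  then have "ball x \<eta> \<inter> orep (EN E (ereal t) {y. c < u y}) = {}"
    by (intro orep_Int_open_empty) simp_all
  moreover have "x \<in> ball x \<eta>" using \<eta> by simp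
  ultimately show ?thesis by blast
qed

lemma cstsym_le:
  assumes "0 \<le> k" and "\<And>c. k < c \<Longrightarrow> x \<notin> orep (EN E t {y. c < u y})"
  shows "cstsym E t u x \<le> k"
proof (cases "\<exists>c>0. x \<in> orep (EN E t {y. c < u y})")
  case True
  then have "cstsym E t u x = Sup {c. 0 < c \<and> x \<in> orep (EN E t {y. c < u y})}"
    unfolding cstsym_def by simp
  also have "\<dots> \<le> k"
    using True assms(2) by (intro cSup_least) (auto simp: not_less[symmetric])
  finally show ?thesis .
next
  case False
  then have "cstsym E t u x = 0" unfolding cstsym_def by (rule if_not_P)
  with assms(1) show ?thesis by simp
qed

theorem lemma3:
  fixes f :: "real \<Rightarrow> real \<Rightarrow> real"
    and g :: "real \<Rightarrow> real"
    and lam :: "real \<Rightarrow> real"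
    and \<Omega> :: "(real \<times> 'a::euclidean_space) set"
    and u :: "real \<times> 'a \<Rightarrow> real"
    and Du :: "real \<times> 'a \<Rightarrow> real \<times> 'a"
    and L R t :: real
    and E :: "ereal \<Rightarrow> real set \<Rightarrow> real set"
    and x :: "real \<times> 'a"
  assumes f_meas: "(\<lambda>(r, v). f r v) \<in> borel_measurable (restrict_space borel ({0..} \<times> {0..}))"
    and f_bdd: "\<exists>M. \<forall>r\<ge>0. \<forall>v\<ge>0. \<bar>f r v\<bar> \<le> M"
    and f_cont: "\<forall>v\<ge>0. \<forall>\<epsilon>>0. \<exists>\<delta>>0. \<forall>r\<ge>0. \<forall>w\<ge>0. \<bar>w - v\<bar> < \<delta> \<longrightarrow> \<bar>f r w - f r v\<bar> < \<epsilon>"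
    and f_mono: "\<forall>v\<ge>0. \<forall>r s. 0 \<le> r \<and> r \<le> s \<longrightarrow> f s v \<le> f r v"
    and g_cont: "continuous_on {0..} g"
    and g_C1: "\<forall>r>0. g differentiable (at r)" "continuous_on {0<..} (deriv g)"
    and g0: "g 0 = 0"
    and g_pos: "\<forall>r>0. deriv g r > 0"
    and lam_cont: "continuous_on {0..} lam"
    and lam_pos: "\<forall>r\<ge>0. lam r > 0"
    and lam_mono: "mono_on {0..} lam"
    and dom: "open \<Omega>" "connected \<Omega>" "\<Omega> \<noteq> {}" "bounded \<Omega>"
    and u_C1: "\<forall>y\<in>\<Omega>. (u has_derivative (\<lambda>h. Du y \<bullet> h)) (at y)" "continuous_on \<Omega> Du"
    and u_cont: "continuous_on (closure \<Omega>) u"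
    and u_pos: "\<forall>y\<in>\<Omega>. u y > 0"
    and u_bdry: "\<forall>y\<in>frontier \<Omega>. u y = 0"
    and u_ext: "\<forall>y. y \<notin> \<Omega> \<longrightarrow> u y = 0"
    and weak_sol: "\<forall>v Dv. W01_1 \<Omega> v Dv \<and> W1inf \<Omega> v Dv \<longrightarrow>
        (LINT y:\<Omega>|lebesgue. Gfield g (Du y) \<bullet> Dv y) = (LINT y:\<Omega>|lebesgue. f (norm y) (u y) * v y)"
    and grad_bdry: "\<forall>\<epsilon>>0. \<exists>U. open U \<and> frontier \<Omega> \<subseteq> U \<and>
        (\<forall>y\<in>U \<inter> \<Omega>. \<bar>norm (Du y) - lam (norm y)\<bar> < \<epsilon>)"
    and L_lip: "L-lipschitz_on UNIV u"
    and L_least: "\<forall>L'. L'-lipschitz_on UNIV u \<longrightarrow> L \<le> L'"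
    and R_pos: "R > 0"
    and R_ball: "closure \<Omega> \<subseteq> ball 0 R"
    and E_csts: "CStS E"
    and t_nonneg: "0 \<le> t"
    and big: "cstsym E (ereal t) u x > (2 * R * L) * t"
  shows "x \<in> \<Omega>"
proof (rule ccontr)
  assume "x \<notin> \<Omega>"
  then have ux: "u x = 0" using u_ext by blast
  obtain y where "y \<in> \<Omega>" using dom(3) by blast
  then have "0 < \<bar>u y - u x\<bar>" using u_pos ux by fastforce
  also have "\<dots> \<le> L * dist y x" using lipschitz_onD[OF L_lip] by (simp add: dist_real_def)
  finally have "L \<noteq> 0" by auto
  with lipschitz_on_nonneg[OF L_lip] have L: "0 < L" by simp
  have supp: "norm z \<le> R" if "0 < u z" for z
  proof -
    have "z \<in> \<Omega>" using u_ext that by (metis less_irrefl)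
    then have "z \<in> ball 0 R" using R_ball closure_subset by blast
    then show ?thesis by simp
  qed
  have "cstsym E (ereal t) u x \<le> 2 * R * L * t"
  proof (rule cstsym_le)
    show "0 \<le> 2 * R * L * t" using R_pos L t_nonneg by simp
    fix c assume "2 * R * L * t < c"
    moreover have "L * R * t \<le> 2 * R * L * t" using R_pos L t_nonneg by simp
    ultimately have "L * R * t < c" by linarith
    then show "x \<notin> orep (EN E (ereal t) {y. c < u y})"
      using not_in_orep_EN_superlevel[OF E_csts t_nonneg less_imp_le[OF R_pos] L L_lip _ supp] ux
      by simp
  qed
  with big show False by simp
qed

end
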